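(* For all integers $n \ge 8$ and $d \ge 6$ with $d \le n-1$, \[ \binom{d-1}{2} + (d-1)\binom{n-d}{2}\,\mathcal{F}_{P_{n-d}} \le \binom{n}{2}\,\mathcal{F}_{P_n}. \]
   Context: $\mathcal{F}_{P_m}$ (for $m\ge1$) is the number of minimal forts of the path on $m$ vertices; equivalently $\mathcal{F}_{P_m}=a_m$ where $a_1=a_2=a_3=1$ and $a_m = a_{m-2}+a_{m-3}$ for $m \ge 4$. (A fort is a nonempty vertex set such that every vertex outside it has zero or at least two neighbors in it; minimal means no proper subset is a fort.) Binomial coefficients $\binom{j}{2}$ with $j<2$ are $0$. *)

theory Defs
  imports Main
begin

definition path_adj :: "nat \<Rightarrow> nat \<Rightarrow> bool" where
  "path_adj i j \<longleftrightarrow> i = Suc j \<or> j = Suc i"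

definition is_fort_path :: "nat \<Rightarrow> nat set \<Rightarrow> bool" where
  "is_fort_path m F \<longleftrightarrow> F \<noteq> {} \<and> F \<subseteq> {0..<m} \<and>
     (\<forall>v \<in> {0..<m} - F. card {u \<in> F. path_adj u v} \<noteq> 1)"

definition is_minimal_fort_path :: "nat \<Rightarrow> nat set \<Rightarrow> bool" where
  "is_minimal_fort_path m F \<longleftrightarrow> is_fort_path m F \<and>
     (\<forall>G. G \<subset> F \<longrightarrow> \<not> is_fort_path m G)"

definition num_min_forts_path :: "nat \<Rightarrow> nat" where
  "num_min_forts_path m = card {F. is_minimal_fort_path m F}"

end

theory Submission
  imports Defs
begin

text \<open>A vertex outside a fort of a path never sees exactly one neighbour in it, so two
  consecutive vertices missing from a fort force the neighbouring vertices to be missing as well,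
  and the fort would be empty. Hence the forts of \<open>P\<^sub>m\<close> are the sets containing both
  end vertices and missing no two consecutive vertices, and the minimal ones are those that
  moreover contain no three consecutive vertices. Splitting such a set on the path
  with \<open>m + 3\<close> vertices according to whether it contains \<open>m + 1\<close> yields the Padovan
  recurrence for their number.

  Padovan numbers grow at least by the factor 21/16 from index 12 on, and
  \<open>(d - 1) 16\<^sup>d \<le> 21\<^sup>d\<close> for \<open>d \<ge> 6\<close>; so for \<open>k = n - d \<ge> 12\<close> the factor \<open>d - 1\<close>
  is absorbed by the shift from \<open>k\<close> to \<open>n\<close>, while the finitely many smaller \<open>k\<close> are checked
  directly. The identity \<open>C(k + d, 2) = C(k, 2) + k d + C(d, 2)\<close> adds up the two parts.\<close>

lemma path_adj_neighbours:
  assumes "v \<notin> F"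
  shows "{u \<in> F. path_adj u v} = F \<inter> {v - 1, Suc v}"
  using assms unfolding path_adj_def by (cases v) auto

text \<open>For \<open>v = 0\<close> the truncated \<open>v - 1\<close> is \<open>v\<close> itself, so the condition says \<open>1 \<notin> F\<close>.\<close>

lemma is_fort_path_iff_balanced:
  "is_fort_path m F \<longleftrightarrow>
     F \<noteq> {} \<and> F \<subseteq> {..<m} \<and> (\<forall>v<m. v \<notin> F \<longrightarrow> (v - 1 \<in> F \<longleftrightarrow> Suc v \<in> F))"
proof -
  have "card {u \<in> F. path_adj u v} \<noteq> 1 \<longleftrightarrow> (v - 1 \<in> F \<longleftrightarrow> Suc v \<in> F)" if "v \<notin> F" for v
    unfolding path_adj_neighbours[OF that]
    by (cases "v - 1 \<in> F"; cases "Suc v \<in> F") (auto simp: Int_insert_right)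
  then show ?thesis
    unfolding is_fort_path_def atLeast0LessThan by blast
qed

lemma fort_path_no_gap:
  assumes fort: "is_fort_path m F" and "Suc i < m"
  shows "i \<in> F \<or> Suc i \<in> F"
proof (rule ccontr)
  assume "\<not> ?thesis"
  then have gap: "i \<notin> F \<and> Suc i \<notin> F" by blast
  have sub: "F \<subseteq> {..<m}"
    and balanced: "\<And>v. v < m \<Longrightarrow> v \<notin> F \<Longrightarrow> v - 1 \<in> F \<longleftrightarrow> Suc v \<in> F"
    using fort unfolding is_fort_path_iff_balanced by auto
  have "j \<notin> F \<and> Suc j \<notin> F" if "i \<le> j" for j
    using that
  proof (induction j rule: dec_induct)
    case (step j)
    then show ?case using sub balanced[of "Suc j"] by (cases "Suc j < m") auto
  qed (rule gap)
  moreover have "j \<notin> F \<and> Suc j \<notin> F" if "j \<le> i" for j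
    using that
  proof (induction j rule: inc_induct)
    case (step j)
    then show ?case using balanced[of "Suc j"] \<open>Suc i < m\<close> by auto
  qed (rule gap)
  ultimately have "F = {}" by (meson nat_le_linear ex_in_conv)
  then show False using fort unfolding is_fort_path_def by blast
qed

definition fort_shape :: "nat \<Rightarrow> nat set \<Rightarrow> bool" where
  "fort_shape m F \<longleftrightarrow> F \<subseteq> {..<m} \<and> 0 \<in> F \<and> m - 1 \<in> F \<and>
     (\<forall>i. Suc i < m \<longrightarrow> i \<in> F \<or> Suc i \<in> F)"

definition min_fort_shape :: "nat \<Rightarrow> nat set \<Rightarrow> bool" where
  "min_fort_shape m F \<longleftrightarrow> fort_shape m F \<and>
     (\<forall>i. Suc (Suc i) < m \<longrightarrow> \<not> {i, Suc i, Suc (Suc i)} \<subseteq> F)"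

lemma is_fort_path_iff_fort_shape: "is_fort_path m F \<longleftrightarrow> fort_shape m F"
proof
  assume fort: "is_fort_path m F"
  then have "F \<noteq> {}" and sub: "F \<subseteq> {..<m}"
    and balanced: "\<And>v. v < m \<Longrightarrow> v \<notin> F \<Longrightarrow> v - 1 \<in> F \<longleftrightarrow> Suc v \<in> F"
    unfolding is_fort_path_iff_balanced by auto
  note no_gap = fort_path_no_gap[OF fort]
  have "0 \<in> F \<and> m - 1 \<in> F"
  proof (cases "m \<le> 1")
    case True
    with sub have "F \<subseteq> {0}" by auto
    with \<open>F \<noteq> {}\<close> True show ?thesis by auto
  next
    case False
    then obtain k where m: "m = Suc (Suc k)"
      by (metis One_nat_def not_le less_imp_Suc_add plus_1_eq_Suc)
    have "Suc (Suc k) \<notin> F" using sub m by auto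
    then show ?thesis
      using balanced[of 0] no_gap[of 0] balanced[of "Suc k"] no_gap[of k] m by auto
  qed
  with sub no_gap show "fort_shape m F" unfolding fort_shape_def by blast
next
  assume "fort_shape m F"
  then have sub: "F \<subseteq> {..<m}" and ends: "0 \<in> F" "m - 1 \<in> F"
    and no_gap: "\<And>i. Suc i < m \<Longrightarrow> i \<in> F \<or> Suc i \<in> F"
    unfolding fort_shape_def by auto
  have "v - 1 \<in> F \<and> Suc v \<in> F" if "v < m" "v \<notin> F" for v
  proof -
    from that ends have "v \<noteq> 0" "v \<noteq> m - 1" by metis+
    then show ?thesis using no_gap[of "v - 1"] no_gap[of v] that by auto
  qed
  with sub ends show "is_fort_path m F" unfolding is_fort_path_iff_balanced by blast
qed

lemma fort_shape_remove_middle: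
  assumes "fort_shape m F" "{i, Suc i, Suc (Suc i)} \<subseteq> F" "Suc (Suc i) < m"
  shows "fort_shape m (F - {Suc i})"
  using assms unfolding fort_shape_def by auto

lemma is_minimal_fort_path_iff_min_fort_shape:
  "is_minimal_fort_path m F \<longleftrightarrow> min_fort_shape m F"
proof
  assume "is_minimal_fort_path m F"
  then have F: "fort_shape m F" and min: "\<And>G. G \<subset> F \<Longrightarrow> \<not> fort_shape m G"
    unfolding is_minimal_fort_path_def is_fort_path_iff_fort_shape by auto
  have "\<not> {i, Suc i, Suc (Suc i)} \<subseteq> F" if "Suc (Suc i) < m" for i
    using fort_shape_remove_middle[OF F _ that] min[of "F - {Suc i}"] by blast
  with F show "min_fort_shape m F" unfolding min_fort_shape_def by blast
next
  assume "min_fort_shape m F"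
  then have F: "fort_shape m F"
    and no_triple: "\<And>i. Suc (Suc i) < m \<Longrightarrow> \<not> {i, Suc i, Suc (Suc i)} \<subseteq> F"
    unfolding min_fort_shape_def by auto
  have "\<not> fort_shape m G" if "G \<subset> F" for G
  proof
    assume G: "fort_shape m G"
    then have G_ends: "0 \<in> G" "m - 1 \<in> G"
      and G_no_gap: "\<And>i. Suc i < m \<Longrightarrow> i \<in> G \<or> Suc i \<in> G"
      unfolding fort_shape_def by auto
    obtain x where x: "x \<in> F" "x \<notin> G" using \<open>G \<subset> F\<close> by blast
    with G_ends have "x \<noteq> 0" "x \<noteq> m - 1" by metis+
    moreover have "x < m" using F x(1) unfolding fort_shape_def by auto
    ultimately obtain y where y: "x = Suc y" "Suc x < m"
      by (metis Suc_lessI diff_Suc_1 not0_implies_Suc)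
    then have "{y, Suc y, Suc (Suc y)} \<subseteq> F"
      using G_no_gap[of y] G_no_gap[of x] x \<open>G \<subset> F\<close> by auto
    then show False
      using no_triple[of y] y by simp
  qed
  with F show "is_minimal_fort_path m F"
    unfolding is_minimal_fort_path_def is_fort_path_iff_fort_shape by blast
qed

lemma min_fort_shape_restrict:
  assumes "min_fort_shape q F" "0 < p" "p \<le> q" "p - 1 \<in> F"
  shows "min_fort_shape p (F \<inter> {..<p})"
  using assms unfolding min_fort_shape_def fort_shape_def by auto

lemma min_fort_shape_extend_one:
  assumes "min_fort_shape (m + 1) G"
  shows "min_fort_shape (m + 3) (insert (m + 2) G)"
  using assms unfolding min_fort_shape_def fort_shape_def
  by auto (metis less_SucE)

lemma min_fort_shape_extend_two:
  assumes "min_fort_shape m G"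
  shows "min_fort_shape (m + 3) (insert (m + 1) (insert (m + 2) G))"
  using assms unfolding min_fort_shape_def fort_shape_def
  by auto (metis Suc_lessI diff_Suc_1' less_Suc_eq)

lemma min_fort_shapes_Suc3:
  "{F. min_fort_shape (m + 3) F} =
     insert (m + 2) ` {G. min_fort_shape (m + 1) G} \<union>
     (\<lambda>G. insert (m + 1) (insert (m + 2) G)) ` {G. min_fort_shape m G}"
  (is "?L = ?R")
proof
  show "?L \<subseteq> ?R"
  proof
    fix F assume "F \<in> ?L"
    then have F: "min_fort_shape (m + 3) F" by simp
    then have sub: "F \<subseteq> {..<m + 3}" and "0 \<in> F" "m + 2 \<in> F"
      and no_gap: "\<And>i. Suc i < m + 3 \<Longrightarrow> i \<in> F \<or> Suc i \<in> F"
      and "\<not> {m, m + 1, m + 2} \<subseteq> F"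
      unfolding min_fort_shape_def fort_shape_def by (auto simp: numeral_3_eq_3)
    show "F \<in> ?R"
    proof (cases "m + 1 \<in> F")
      case False
      then have "F = insert (m + 2) (F \<inter> {..<m + 1})"
        using sub \<open>m + 2 \<in> F\<close>
        by (auto simp: subset_iff less_Suc_eq numeral_3_eq_3)
      moreover have "min_fort_shape (m + 1) (F \<inter> {..<m + 1})"
        using min_fort_shape_restrict[OF F] False no_gap[of m] by simp
      ultimately show ?thesis by blast
    next
      case True
      then have "m \<notin> F" using \<open>\<not> {m, m + 1, m + 2} \<subseteq> F\<close> \<open>m + 2 \<in> F\<close> by blast
      then have "0 < m" using \<open>0 \<in> F\<close> by (cases m) auto
      have "m - 1 \<in> F"
        using no_gap[of "m - 1"] \<open>m \<notin> F\<close> \<open>0 < m\<close> by simp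
      have "F = insert (m + 1) (insert (m + 2) (F \<inter> {..<m}))"
        using sub True \<open>m + 2 \<in> F\<close> \<open>m \<notin> F\<close>
        by (auto simp: subset_iff less_Suc_eq numeral_3_eq_3)
      moreover have "min_fort_shape m (F \<inter> {..<m})"
        using min_fort_shape_restrict[OF F \<open>0 < m\<close>] \<open>m - 1 \<in> F\<close> by simp
      ultimately show ?thesis by blast
    qed
  qed
  show "?R \<subseteq> ?L"
    using min_fort_shape_extend_one[of m] min_fort_shape_extend_two[of m] by blast
qed

lemma finite_min_fort_shapes: "finite {F. min_fort_shape m F}"
  by (rule finite_subset[of _ "Pow {..<m}"]) (auto simp: min_fort_shape_def fort_shape_def)

lemma card_min_fort_shapes_Suc3:
  "card {F. min_fort_shape (m + 3) F} =
     card {G. min_fort_shape (m + 1) G} + card {G. min_fort_shape m G}"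
proof -
  let ?A = "{G. min_fort_shape (m + 1) G}" and ?B = "{G. min_fort_shape m G}"
  have inj_A: "inj_on (insert (m + 2)) ?A"
    by (rule inj_on_inverseI[where g = "\<lambda>F. F \<inter> {..<m + 1}"])
      (auto simp: min_fort_shape_def fort_shape_def)
  have inj_B: "inj_on (\<lambda>G. insert (m + 1) (insert (m + 2) G)) ?B"
    by (rule inj_on_inverseI[where g = "\<lambda>F. F \<inter> {..<m}"])
      (auto simp: min_fort_shape_def fort_shape_def)
  have "m + 1 \<notin> F" if "F \<in> insert (m + 2) ` ?A" for F
    using that by (auto simp: min_fort_shape_def fort_shape_def)
  then have disjoint: "insert (m + 2) ` ?A \<inter> (\<lambda>G. insert (m + 1) (insert (m + 2) G)) ` ?B = {}"
    by blast
  show ?thesis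
    unfolding min_fort_shapes_Suc3
      card_Un_disjoint[OF finite_imageI finite_imageI disjoint,
        OF finite_min_fort_shapes finite_min_fort_shapes]
      card_image[OF inj_A] card_image[OF inj_B] ..
qed

fun padovan :: "nat \<Rightarrow> nat" where
  "padovan 0 = 0"
| "padovan (Suc 0) = 1"
| "padovan (Suc (Suc 0)) = 1"
| "padovan (Suc (Suc (Suc m))) = padovan (Suc m) + padovan m"

lemma card_min_fort_shapes: "card {F. min_fort_shape m F} = padovan m"
proof (induction m rule: padovan.induct)
  case 1
  have "{F. min_fort_shape 0 F} = {}" by (auto simp: min_fort_shape_def fort_shape_def)
  then show ?case by simp
next
  case 2
  have "{F. min_fort_shape 1 F} = {{0}}" by (auto simp: min_fort_shape_def fort_shape_def)
  then show ?case by simp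
next
  case 3
  have "{F. min_fort_shape 2 F} = {{0, 1}}"
    by (auto simp: min_fort_shape_def fort_shape_def numeral_2_eq_2 less_Suc_eq)
  then show ?case by (simp add: numeral_2_eq_2)
next
  case (4 m)
  then show ?case using card_min_fort_shapes_Suc3[of m] by (simp add: numeral_3_eq_3)
qed

lemma num_min_forts_path_eq_padovan: "num_min_forts_path m = padovan m"
  unfolding num_min_forts_path_def is_minimal_fort_path_iff_min_fort_shape
  by (rule card_min_fort_shapes)

lemma padovan_le_Suc: "padovan m \<le> padovan (Suc m)"
  by (induction m rule: padovan.induct) auto

lemma padovan_mono: "a \<le> b \<Longrightarrow> padovan a \<le> padovan b"
  using padovan_le_Suc by (rule lift_Suc_mono_le)

lemma padovan_add3: "padovan (m + 3) = padovan (m + 1) + padovan m"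
  by (simp add: numeral_3_eq_3)

text \<open>The recurrence is linear with nonnegative coefficients, so the ratio bound propagates
  from the three base cases \<open>336 \<le> 336\<close>, \<open>441 \<le> 448\<close>, \<open>588 \<le> 592\<close>.\<close>

lemma padovan_ratio_from_12: "21 * padovan (m + 12) \<le> 16 * padovan (m + 13)"
proof (induction m rule: padovan.induct)
  case (4 m)
  have "padovan (m + 15) = padovan (m + 13) + padovan (m + 12)"
    "padovan (m + 16) = padovan (m + 14) + padovan (m + 13)"
    using padovan_add3[of "m + 12"] padovan_add3[of "m + 13"] by (simp_all add: ac_simps)
  with 4 show ?case by (simp add: ac_simps)
qed (simp_all add: numeral_eq_Suc)

lemma padovan_ratio:
  assumes "12 \<le> m"
  shows "21 * padovan m \<le> 16 * padovan (Suc m)"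
  using padovan_ratio_from_12[of "m - 12"] assms by simp

lemma padovan_geometric:
  assumes "12 \<le> m"
  shows "21 ^ d * padovan m \<le> 16 ^ d * padovan (m + d)"
proof (induction d)
  case (Suc d)
  have "21 ^ Suc d * padovan m \<le> 21 * (16 ^ d * padovan (m + d))"
    using Suc.IH by simp
  also have "\<dots> \<le> 16 ^ d * (16 * padovan (Suc (m + d)))"
    using padovan_ratio[of "m + d"] assms by simp
  finally show ?case by simp
qed simp

lemma pred_mult_16_pow_le_21_pow:
  assumes "6 \<le> d"
  shows "(d - 1) * 16 ^ d \<le> (21::nat) ^ d"
  using assms
proof (induction d rule: dec_induct)
  case (step d)
  have "(Suc d - 1) * 16 ^ Suc d \<le> (21 * (d - 1)) * 16 ^ d"
    using step.hyps by simp
  also have "\<dots> \<le> 21 * 21 ^ d" using step.IH by simp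
  finally show ?case by simp
qed simp

lemma padovan_shift_large:
  assumes "12 \<le> k" "6 \<le> d"
  shows "(d - 1) * padovan k \<le> padovan (k + d)"
proof -
  have "16 ^ d * ((d - 1) * padovan k) \<le> 21 ^ d * padovan k"
    using pred_mult_16_pow_le_21_pow[OF assms(2)] by (simp add: mult.commute)
  also have "\<dots> \<le> 16 ^ d * padovan (k + d)"
    using padovan_geometric[OF assms(1)] .
  finally show ?thesis by simp
qed

lemma padovan_shift_small:
  assumes "k < 12"
  shows "(k choose 2) * padovan k \<le> k * padovan (k + 6)"
  using assms by (auto simp: less_Suc_eq numeral_eq_Suc choose_two)

lemma choose_two_add: "(k + d) choose 2 = (k choose 2) + k * d + (d choose 2)"
  using vandermonde[where r = 2 and m = k and n = d] by (simp add: numeral_2_eq_2 atMost_Suc)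

lemma padovan_shift_weighted:
  assumes "6 \<le> d"
  shows "(d - 1) * (k choose 2) * padovan k \<le> ((k choose 2) + k * d) * padovan (k + d)"
proof (cases "12 \<le> k")
  case True
  have "(d - 1) * (k choose 2) * padovan k = (k choose 2) * ((d - 1) * padovan k)"
    by simp
  also have "\<dots> \<le> (k choose 2) * padovan (k + d)"
    using padovan_shift_large[OF True assms] by simp
  also have "\<dots> \<le> ((k choose 2) + k * d) * padovan (k + d)"
    by (simp add: add_mult_distrib)
  finally show ?thesis .
next
  case False
  have "(d - 1) * (k choose 2) * padovan k \<le> (d - 1) * (k * padovan (k + 6))"
    using padovan_shift_small[of k] False by (simp add: mult.assoc)
  also have "\<dots> \<le> (d - 1) * (k * padovan (k + d))"
    using padovan_mono[of "k + 6" "k + d"] assms by simp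
  also have "\<dots> \<le> ((k choose 2) + k * d) * padovan (k + d)"
    by (simp add: algebra_simps mult_right_mono)
  finally show ?thesis .
qed

theorem mainTheorem19:
  fixes n d :: nat
  assumes "n \<ge> 8" and "d \<ge> 6" and "d \<le> n - 1"
  shows "(d - 1 choose 2) + (d - 1) * (n - d choose 2) * num_min_forts_path (n - d)
           \<le> (n choose 2) * num_min_forts_path n"
proof -
  define k where "k = n - d"
  have n: "n = k + d" using assms unfolding k_def by simp
  have "1 \<le> padovan n" using padovan_mono[of 1 n] assms(1) by simp
  then have "(d - 1 choose 2) \<le> (d choose 2) * padovan n"
    using binomial_right_mono[of "d - 1" d 2] by (simp add: le_trans)
  moreover have "(d - 1) * (k choose 2) * padovan k \<le> ((k choose 2) + k * d) * padovan n"
    using padovan_shift_weighted[OF assms(2)] n by simp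
  ultimately have "(d - 1 choose 2) + (d - 1) * (k choose 2) * padovan k
      \<le> ((k + d) choose 2) * padovan n"
    by (simp add: choose_two_add algebra_simps)
  then show ?thesis
    unfolding num_min_forts_path_eq_padovan k_def[symmetric] n[symmetric] .
qed

end
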